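(* Let $\mathcal{F}=(\mathcal{F}_1,\dots,\mathcal{F}_r)$ be a flag on $\mathbb{F}_{q^n}$ whose best friend is the subfield $\mathbb{F}_{q^m}$, and let $\beta\in\mathbb{F}_{q^n}^\ast\setminus\mathbb{F}_{q^m}^\ast$. (1) If exactly $j\geq 1$ of the subspaces $\mathcal{F}_1,\dots,\mathcal{F}_r$ have $\mathbb{F}_{q^m}$ as their best friend, then $d_f(\mathrm{Orb}_\beta(\mathcal{F}))\geq 2mj$. (2) If $d_f(\mathrm{Orb}_\beta(\mathcal{F}))=2m$, then $\mathbb{F}_{q^m}$ is the best friend of exactly one subspace of $\mathcal{F}$.
   Context: $q$ is a prime power and $\mathbb{F}_{q^n}$ is regarded as an $n$-dimensional $\mathbb{F}_q$-vector space; all subspaces are $\mathbb{F}_q$-subspaces. The subspace distance is $d_S(\mathcal{U},\mathcal{V})=\dim(\mathcal{U}+\mathcal{V})-\dim(\mathcal{U}\cap\mathcal{V})$. A flag $\mathcal{F}=(\mathcal{F}_1,\dots,\mathcal{F}_r)$ on $\mathbb{F}_{q^n}$ is a sequence of subspaces $\{0\}\subsetneq\mathcal{F}_1\subsetneq\cdots\subsetneq\mathcal{F}_r\subsetneq\mathbb{F}_{q^n}$; its type is $(\dim\mathcal{F}_1,\dots,\dim\mathcal{F}_r)$. The flag distance between flags of the same type is $d_f(\mathcal{F},\mathcal{F}')=\sum_{i=1}^r d_S(\mathcal{F}_i,\mathcal{F}'_i)$. A flag code is a nonempty set of flags of a fixed type; its minimum distance $d_f(\mathcal{C})$ is the minimum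 of $d_f$ over pairs of distinct elements (and $0$ if $|\mathcal{C}|=1$). For $\beta\in\mathbb{F}_{q^n}^\ast$ of multiplicative order $|\beta|$, $\mathcal{F}\beta=(\mathcal{F}_1\beta,\dots,\mathcal{F}_r\beta)$ and $\mathrm{Orb}_\beta(\mathcal{F})=\{\mathcal{F}\beta^j: 0\le j\le|\beta|-1\}$. A subfield $\mathbb{F}_{q^m}\subseteq\mathbb{F}_{q^n}$ is a friend of a subspace $\mathcal{U}$ if $\mathcal{U}$ is an $\mathbb{F}_{q^m}$-vector space (closed under multiplication by $\mathbb{F}_{q^m}$); the best friend of $\mathcal{U}$ is its largest friend. A subfield is a friend of a flag if it is a friend of all its subspaces; the best friend of a flag is its largest friend. *)

theory Defs
  imports "HOL-Algebra.Algebra"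
begin

text \<open>Setting: R is the finite field F_{q^n} (a HOL-Algebra field record with finite carrier),
  K is the subfield F_q. All subspaces are K-subspaces of carrier R, i.e. subalgebra K U R,
  and dimensions are the HOL-Algebra dimension over K.\<close>

definition subspace_dist :: "('a, 'b) ring_scheme \<Rightarrow> 'a set \<Rightarrow> 'a set \<Rightarrow> 'a set \<Rightarrow> nat" where
  "subspace_dist R K U V =
     ring.dim R K (U <+>\<^bsub>R\<^esub> V) - ring.dim R K (U \<inter> V)"

definition is_flag :: "('a, 'b) ring_scheme \<Rightarrow> 'a set \<Rightarrow> 'a set list \<Rightarrow> bool" where
  "is_flag R K F \<longleftrightarrow> F \<noteq> [] \<and>
     (\<forall>i < length F. subalgebra K (F ! i) R) \<and>
     {\<zero>\<^bsub>R\<^esub>} \<subset> F ! 0 \<and>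
     (\<forall>i. Suc i < length F \<longrightarrow> F ! i \<subset> F ! Suc i) \<and>
     last F \<subset> carrier R"

definition flag_dist :: "('a, 'b) ring_scheme \<Rightarrow> 'a set \<Rightarrow> 'a set list \<Rightarrow> 'a set list \<Rightarrow> nat" where
  "flag_dist R K F G = (\<Sum>i < length F. subspace_dist R K (F ! i) (G ! i))"

definition min_flag_dist :: "('a, 'b) ring_scheme \<Rightarrow> 'a set \<Rightarrow> 'a set list set \<Rightarrow> nat" where
  "min_flag_dist R K C =
     (if card C = 1 then 0
      else Min {flag_dist R K F G | F G. F \<in> C \<and> G \<in> C \<and> F \<noteq> G})"

definition flag_mult :: "('a, 'b) ring_scheme \<Rightarrow> 'a set list \<Rightarrow> 'a \<Rightarrow> 'a set list" where
  "flag_mult R F \<beta> = map (\<lambda>U. (\<lambda>x. x \<otimes>\<^bsub>R\<^esub> \<beta>) ` U) F"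

definition flag_orbit :: "('a, 'b) ring_scheme \<Rightarrow> 'a \<Rightarrow> 'a set list \<Rightarrow> 'a set list set" where
  "flag_orbit R \<beta> F =
     {flag_mult R F (\<beta> [^]\<^bsub>R\<^esub> j) | j. j < group.ord (mult_of R) \<beta>}"

definition friend :: "('a, 'b) ring_scheme \<Rightarrow> 'a set \<Rightarrow> 'a set \<Rightarrow> 'a set \<Rightarrow> bool" where
  "friend R K L U \<longleftrightarrow> subfield L R \<and> K \<subseteq> L \<and> subalgebra L U R"

definition best_friend :: "('a, 'b) ring_scheme \<Rightarrow> 'a set \<Rightarrow> 'a set \<Rightarrow> 'a set \<Rightarrow> bool" where
  "best_friend R K L U \<longleftrightarrow> friend R K L U \<and> (\<forall>L'. friend R K L' U \<longrightarrow> L' \<subseteq> L)"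

definition flag_friend :: "('a, 'b) ring_scheme \<Rightarrow> 'a set \<Rightarrow> 'a set \<Rightarrow> 'a set list \<Rightarrow> bool" where
  "flag_friend R K L F \<longleftrightarrow> subfield L R \<and> K \<subseteq> L \<and> (\<forall>i < length F. friend R K L (F ! i))"

definition flag_best_friend :: "('a, 'b) ring_scheme \<Rightarrow> 'a set \<Rightarrow> 'a set \<Rightarrow> 'a set list \<Rightarrow> bool" where
  "flag_best_friend R K L F \<longleftrightarrow> flag_friend R K L F \<and> (\<forall>L'. flag_friend R K L' F \<longrightarrow> L' \<subseteq> L)"

end

theory Submission
  imports Defs
begin

text \<open>The best friend of a subspace U is its multiplicative stabilizer
  S = {x. x U \<subseteq> U}, a subfield. If g \<notin> S then U and U g are distinct S-subspaces of the
  same S-dimension, so their S-subspace distance is at least 2, and their K-distance is at least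
  2 dim_K(S). Two distinct flags F a, F b of the orbit differ, with g = a\<inverse>b, exactly in the
  components whose stabilizer misses g; these include every component with best friend
  L = F_{q^m}, since g \<notin> L, and each of them contributes at least 2m.
  A distance of exactly 2m therefore leaves room for a single such component.\<close>

definition mult_stabilizer :: "('a, 'b) ring_scheme \<Rightarrow> 'a set \<Rightarrow> 'a set" where
  "mult_stabilizer R U = {x \<in> carrier R. \<forall>u\<in>U. x \<otimes>\<^bsub>R\<^esub> u \<in> U}"

definition set_rmult :: "('a, 'b) ring_scheme \<Rightarrow> 'a set \<Rightarrow> 'a \<Rightarrow> 'a set" where
  "set_rmult R U a = (\<lambda>x. x \<otimes>\<^bsub>R\<^esub> a) ` U"

lemma (in ring) add_subgroupE:
  assumes "subgroup U (add_monoid R)"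
  shows "U \<subseteq> carrier R" "\<zero> \<in> U" "\<And>x y. x \<in> U \<Longrightarrow> y \<in> U \<Longrightarrow> x \<oplus> y \<in> U"
    "\<And>x. x \<in> U \<Longrightarrow> \<ominus> x \<in> U"
  using subgroup.subset[OF assms] subgroup.one_closed[OF assms] subgroup.m_closed[OF assms]
    subgroup.m_inv_closed[OF assms]
  by (auto simp: a_inv_def)

lemma (in ring) set_rmult_one:
  assumes "U \<subseteq> carrier R" shows "set_rmult R U \<one> = U"
proof -
  have "(\<lambda>x. x \<otimes> \<one>) ` U = (\<lambda>x. x) ` U" using assms by (intro image_cong) (auto simp: subsetD)
  thus ?thesis by (simp add: set_rmult_def)
qed

lemma (in ring) set_rmult_set_rmult:
  assumes "U \<subseteq> carrier R" "a \<in> carrier R" "b \<in> carrier R"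
  shows "set_rmult R (set_rmult R U a) b = set_rmult R U (a \<otimes> b)"
  using assms unfolding set_rmult_def image_image by (intro image_cong) (auto simp: m_assoc subsetD)

lemma (in field) set_rmult_eq_if_subset:
  assumes "finite U" "U \<subseteq> carrier R" "g \<in> carrier R" "g \<noteq> \<zero>" "set_rmult R U g \<subseteq> U"
  shows "set_rmult R U g = U"
proof -
  have "inj_on (\<lambda>u. u \<otimes> g) U"
    using assms(2-4) by (auto simp: inj_on_def) (metis m_rcancel subsetD)
  thus ?thesis
    using assms(1,5) unfolding set_rmult_def by (simp add: card_image card_subset_eq)
qed

lemma (in ring) subalgebra_set_rmult:
  assumes "subalgebra K U R" "K \<subseteq> carrier R" "a \<in> carrier R"
  shows "subalgebra K (set_rmult R U a) R"
proof -
  note U = add_subgroupE[OF subalgebra.axioms(1)[OF assms(1)]]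
  have "subgroup (set_rmult R U a) (add_monoid R)"
  proof (rule add.subgroupI)
    show "set_rmult R U a \<subseteq> carrier R" "set_rmult R U a \<noteq> {}"
      using U assms(3) by (auto simp: set_rmult_def)
    show "\<ominus> x \<in> set_rmult R U a" if x: "x \<in> set_rmult R U a" for x
    proof -
      obtain u where u: "u \<in> U" "x = u \<otimes> a" using x by (auto simp: set_rmult_def)
      hence "\<ominus> x = (\<ominus> u) \<otimes> a" using U assms(3) by (simp add: l_minus subsetD)
      thus ?thesis using u U by (auto simp: set_rmult_def)
    qed
    show "x \<oplus> y \<in> set_rmult R U a" if xy: "x \<in> set_rmult R U a" "y \<in> set_rmult R U a" for x y
    proof -
      obtain u where "u \<in> U" "x = u \<otimes> a" using xy(1) by (auto simp: set_rmult_def)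
      moreover obtain v where "v \<in> U" "y = v \<otimes> a" using xy(2) by (auto simp: set_rmult_def)
      moreover from calculation have "x \<oplus> y = (u \<oplus> v) \<otimes> a" using U assms(3) by (simp add: l_distr subsetD)
      ultimately show ?thesis using U by (auto simp: set_rmult_def)
    qed
  qed
  moreover have "k \<otimes> x \<in> set_rmult R U a" if kx: "k \<in> K" "x \<in> set_rmult R U a" for k x
  proof -
    obtain u where u: "u \<in> U" "x = u \<otimes> a" using kx by (auto simp: set_rmult_def)
    hence "k \<otimes> x = (k \<otimes> u) \<otimes> a" using U assms kx by (simp add: m_assoc subsetD)
    thus ?thesis using u subalgebra.smult_closed[OF assms(1) kx(1)] by (auto simp: set_rmult_def)
  qed
  ultimately show ?thesis unfolding subalgebra_def subalgebra_axioms_def by auto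
qed

lemma (in ring) set_rmult_line_extension:
  assumes "K \<subseteq> carrier R" "E \<subseteq> carrier R" "v \<in> carrier R" "a \<in> carrier R"
  shows "set_rmult R (line_extension K v E) a = line_extension K (v \<otimes> a) (set_rmult R E a)"
proof -
  have distr: "(k \<otimes> v \<oplus> e) \<otimes> a = k \<otimes> (v \<otimes> a) \<oplus> e \<otimes> a" if "k \<in> K" "e \<in> E" for k e
    using assms that by (simp add: l_distr m_assoc subsetD)
  show ?thesis
  proof (intro equalityI subsetI)
    fix x assume "x \<in> set_rmult R (line_extension K v E) a"
    then obtain k e where "k \<in> K" "e \<in> E" "x = (k \<otimes> v \<oplus> e) \<otimes> a"
      by (auto simp: set_rmult_def line_extension_mem_iff)
    thus "x \<in> line_extension K (v \<otimes> a) (set_rmult R E a)"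
      using distr by (auto simp: set_rmult_def line_extension_mem_iff)
  next
    fix x assume "x \<in> line_extension K (v \<otimes> a) (set_rmult R E a)"
    then obtain k e where "k \<in> K" "e \<in> E" "x = k \<otimes> (v \<otimes> a) \<oplus> e \<otimes> a"
      by (auto simp: set_rmult_def line_extension_mem_iff)
    moreover from this have "k \<otimes> v \<oplus> e \<in> line_extension K v E"
      by (auto simp: line_extension_mem_iff)
    ultimately show "x \<in> set_rmult R (line_extension K v E) a"
      using distr unfolding set_rmult_def by (metis image_eqI)
  qed
qed

lemma (in field) dimension_set_rmult:
  assumes "dimension n K E" "subfield K R" "a \<in> carrier R" "a \<noteq> \<zero>"
  shows "dimension n K (set_rmult R E a)"
  using assms
proof (induct rule: dimension.induct)
  case (zero_dim K)
  have "set_rmult R {\<zero>} a = {\<zero>}" using zero_dim by (simp add: set_rmult_def)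
  thus ?case by simp
next
  case (Suc_dim v E n K)
  have Ec: "E \<subseteq> carrier R" using space_subgroup_props(1)[OF Suc_dim(5,3)] .
  have "v \<otimes> a \<notin> set_rmult R E a"
  proof
    assume "v \<otimes> a \<in> set_rmult R E a"
    then obtain e where e: "e \<in> E" "v \<otimes> a = e \<otimes> a" by (auto simp: set_rmult_def)
    hence "v = e" using m_rcancel[OF Suc_dim(7,6) Suc_dim(1)] Ec by blast
    thus False using e Suc_dim(2) by simp
  qed
  moreover have "set_rmult R (line_extension K v E) a = line_extension K (v \<otimes> a) (set_rmult R E a)"
    using set_rmult_line_extension[OF subfieldE(3)[OF Suc_dim(5)] Ec Suc_dim(1,6)] .
  ultimately show ?case
    using Suc_dim(4)[OF Suc_dim(5-7)] Suc_dim(1,6) by (simp add: dimension.Suc_dim)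
qed

lemma (in ring) finite_dimension_carrier:
  assumes "subfield K R" "finite (carrier R)"
  shows "finite_dimension K (carrier R)"
proof -
  obtain xs where xs: "set xs = carrier R" using finite_list[OF assms(2)] by blast
  have "Span K xs \<subseteq> carrier R" using Span_in_carrier subfieldE(3)[OF assms(1)] xs by auto
  moreover have "set xs \<subseteq> Span K xs" using Span_base_incl[OF assms(1)] xs by auto
  ultimately have "Span K xs = carrier R" using xs by auto
  thus ?thesis using Span_finite_dimension[OF assms(1), of xs] xs by simp
qed

lemma (in ring) finite_dimension_subalgebra:
  assumes "subfield K R" "finite (carrier R)" "subalgebra K V R"
  shows "finite_dimension K V"
  using subalbegra_incl_imp_finite_dimension[OF assms(1) finite_dimension_carrier[OF assms(1,2)] assms(3)]
    subalgebra_in_carrier[OF assms(3)] by blast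

lemma (in ring) dimension_dim:
  assumes "subfield K R" "finite (carrier R)" "subalgebra K V R"
  shows "dimension (dim K V) K V"
  using finite_dimensionE[OF assms(1) finite_dimension_subalgebra[OF assms]] by (simp add: over_def)

lemma (in ring) dim_mono:
  assumes "subfield K R" "finite (carrier R)" "subalgebra K V R" "subalgebra K E R" "V \<subseteq> E"
  shows "dim K V \<le> dim K E" and "dim K V = dim K E \<Longrightarrow> V = E"
proof -
  note dE = dimension_dim[OF assms(1,2,4)]
  obtain Us where Us: "set Us \<subseteq> carrier R" "independent K Us" "length Us = dim K V" "Span K Us = V"
    using exists_base[OF assms(1) dimension_dim[OF assms(1-3)]] by blast
  have sub: "set Us \<subseteq> E" using Span_base_incl[OF assms(1) Us(1)] Us(4) assms(5) by auto
  show "dim K V \<le> dim K E"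
    using independent_length_le_dimension[OF assms(1) dE Us(2) sub] Us(3) by simp
  show "V = E" if "dim K V = dim K E"
    using independent_length_eq_dimension[OF assms(1) dE Us(2) sub] Us(3,4) that by simp
qed

lemma (in ring) subfield_imp_subalgebra:
  assumes "subfield S R" "K \<subseteq> S" shows "subalgebra K S R"
  using subring.axioms(1)[OF subfieldE(1)[OF assms(1)]] subringE(6)[OF subfieldE(1)[OF assms(1)]]
    assms(2)
  unfolding subalgebra_def subalgebra_axioms_def by auto

lemma (in field) dim_subfield_pos:
  assumes "subfield K R" "finite (carrier R)" "subfield L R" "K \<subseteq> L"
  shows "0 < dim K L"
proof (rule ccontr)
  assume "\<not> 0 < dim K L"
  hence "dimension 0 K L" using dimension_dim[OF assms(1,2) subfield_imp_subalgebra[OF assms(3,4)]]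
    by simp
  hence "L = {\<zero>}" using dimension_zero[OF assms(1)] by simp
  thus False using subringE(3)[OF subfieldE(1)[OF assms(3)]] one_not_zero by simp
qed

lemma (in field) dim_set_rmult:
  assumes "subfield K R" "finite (carrier R)" "subalgebra K U R" "a \<in> carrier R" "a \<noteq> \<zero>"
  shows "dim K (set_rmult R U a) = dim K U"
  using dimension_set_rmult[OF dimension_dim[OF assms(1-3)] assms(1,4,5)] dimI[OF assms(1)]
  by (simp add: over_def)

subsection \<open>The stabilizer is the best friend\<close>

lemma (in cring) set_rmult_subset_iff_stabilizer:
  assumes "U \<subseteq> carrier R" "g \<in> carrier R"
  shows "set_rmult R U g \<subseteq> U \<longleftrightarrow> g \<in> mult_stabilizer R U"
  using assms by (auto simp: set_rmult_def mult_stabilizer_def m_comm subsetD)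

lemma (in field) set_rmult_eq_iff_stabilizer:
  assumes "finite U" "U \<subseteq> carrier R" "g \<in> carrier R" "g \<noteq> \<zero>"
  shows "set_rmult R U g = U \<longleftrightarrow> g \<in> mult_stabilizer R U"
  using set_rmult_eq_if_subset[OF assms] set_rmult_subset_iff_stabilizer[OF assms(2,3)] by auto

lemma (in field) mult_stabilizer_subfield:
  assumes "subgroup U (add_monoid R)" and fin: "finite (carrier R)"
  shows "subfield (mult_stabilizer R U) R"
proof (rule subfieldI'[OF subringI])
  note U = add_subgroupE[OF assms(1)]
  have fU: "finite U" using U(1) fin finite_subset by blast
  show "mult_stabilizer R U \<subseteq> carrier R" "\<one> \<in> mult_stabilizer R U"
    using U by (auto simp: mult_stabilizer_def)
  show "\<ominus> h \<in> mult_stabilizer R U" if "h \<in> mult_stabilizer R U" for h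
    using that U by (auto simp: mult_stabilizer_def l_minus)
  show "h1 \<otimes> h2 \<in> mult_stabilizer R U" "h1 \<oplus> h2 \<in> mult_stabilizer R U"
    if "h1 \<in> mult_stabilizer R U" "h2 \<in> mult_stabilizer R U" for h1 h2
    using that U by (auto simp: mult_stabilizer_def m_assoc l_distr subsetD)
  show "inv k \<in> mult_stabilizer R U" if k: "k \<in> mult_stabilizer R U - {\<zero>}" for k
  proof -
    have kc: "k \<in> carrier R" "k \<noteq> \<zero>" "k \<in> Units R"
      using k field_Units by (auto simp: mult_stabilizer_def)
    have "set_rmult R U k = U"
      using set_rmult_eq_iff_stabilizer[OF fU U(1) kc(1,2)] k by simp
    have "inv k \<otimes> u \<in> U" if u: "u \<in> U" for u
    proof -
      obtain v where v: "v \<in> U" "u = v \<otimes> k"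
        using u \<open>set_rmult R U k = U\<close> by (auto simp: set_rmult_def)
      hence "inv k \<otimes> u = v" using kc U(1) by (simp add: m_comm m_assoc[symmetric] subsetD)
      thus ?thesis using v by simp
    qed
    thus ?thesis using kc by (auto simp: mult_stabilizer_def)
  qed
qed

lemma (in ring) subalgebra_mult_stabilizer:
  assumes "subalgebra K U R" shows "subalgebra (mult_stabilizer R U) U R"
  using assms unfolding subalgebra_def subalgebra_axioms_def mult_stabilizer_def by auto

lemma (in ring) subalgebra_imp_subset_mult_stabilizer:
  assumes "subalgebra L U R" "L \<subseteq> carrier R" shows "L \<subseteq> mult_stabilizer R U"
  using assms subalgebra.smult_closed[OF assms(1)] unfolding mult_stabilizer_def by auto

lemma (in field) best_friend_iff_mult_stabilizer:
  assumes "subfield K R" "subalgebra K U R" "finite (carrier R)"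
  shows "best_friend R K L U \<longleftrightarrow> L = mult_stabilizer R U"
proof -
  have "friend R K (mult_stabilizer R U) U"
    unfolding friend_def
    using mult_stabilizer_subfield[OF subalgebra.axioms(1)[OF assms(2)] assms(3)]
      subalgebra_mult_stabilizer[OF assms(2)]
      subalgebra_imp_subset_mult_stabilizer[OF assms(2) subfieldE(3)[OF assms(1)]]
    by auto
  moreover have "L' \<subseteq> mult_stabilizer R U" if "friend R K L' U" for L'
    using that subalgebra_imp_subset_mult_stabilizer subfieldE(3) unfolding friend_def by blast
  ultimately show ?thesis unfolding best_friend_def by blast
qed

lemma (in field) mult_stabilizer_set_rmult:
  assumes U: "U \<subseteq> carrier R" and a: "a \<in> carrier R" "a \<noteq> \<zero>"
  shows "mult_stabilizer R (set_rmult R U a) = mult_stabilizer R U"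
proof -
  have "x \<otimes> (u \<otimes> a) \<in> set_rmult R U a \<longleftrightarrow> x \<otimes> u \<in> U" if x: "x \<in> carrier R" and u: "u \<in> U" for x u
  proof -
    have xu: "x \<otimes> u \<in> carrier R" using x u U by auto
    have "x \<otimes> (u \<otimes> a) = (x \<otimes> u) \<otimes> a" using x u U a by (simp add: m_assoc subsetD)
    moreover have "(x \<otimes> u) \<otimes> a = w \<otimes> a \<longleftrightarrow> x \<otimes> u = w" if "w \<in> U" for w
      using m_rcancel[OF a(2,1) xu, of w] that U by auto
    ultimately show ?thesis unfolding set_rmult_def by auto
  qed
  thus ?thesis by (auto simp: mult_stabilizer_def set_rmult_def)
qed

subsection \<open>Distance between a subspace and its translates\<close>

lemma (in field) subspace_dist_set_rmult_ge:
  assumes K: "subfield K R" and fin: "finite (carrier R)" and U: "subalgebra K U R"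
    and g: "g \<in> carrier R" "g \<noteq> \<zero>" "g \<notin> mult_stabilizer R U"
  shows "2 * dim K (mult_stabilizer R U) \<le> subspace_dist R K U (set_rmult R U g)"
proof -
  define S where "S = mult_stabilizer R U"
  define V where "V = set_rmult R U g"
  define W where "W = U \<inter> V"
  have Ucar: "U \<subseteq> carrier R" using subalgebra_in_carrier[OF U] .
  have S: "subfield S R"
    unfolding S_def using mult_stabilizer_subfield[OF subalgebra.axioms(1)[OF U] fin] .
  have KS: "K \<subseteq> S"
    unfolding S_def using subalgebra_imp_subset_mult_stabilizer[OF U subfieldE(3)[OF K]] .
  have US: "subalgebra S U R" unfolding S_def using subalgebra_mult_stabilizer[OF U] .
  have VS: "subalgebra S V R" unfolding V_def using subalgebra_set_rmult[OF US subfieldE(3)[OF S] g(1)] .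
  have WS: "subalgebra S W R" unfolding W_def using subalgebra_inter[OF US VS] .
  have dV: "dim S V = dim S U" unfolding V_def using dim_set_rmult[OF S fin US g(1,2)] .
  have "\<not> U \<subseteq> V"
  proof
    assume "U \<subseteq> V"
    hence "V = U" using dim_mono(2)[OF S fin US VS] dV by simp
    thus False
      using set_rmult_eq_iff_stabilizer[OF finite_subset[OF Ucar fin] Ucar g(1,2)] g(3)
      unfolding V_def by simp
  qed
  hence "W \<subseteq> U" "W \<noteq> U" unfolding W_def by auto
  hence "dim S W < dim S U" using dim_mono[OF S fin WS US] by (meson le_neq_implies_less)
  moreover have "dim S (U <+>\<^bsub>R\<^esub> V) = dim S U + dim S V - dim S W"
    using sum_space_dim(2)[OF S finite_dimension_subalgebra[OF S fin US]
        finite_dimension_subalgebra[OF S fin VS]]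
    unfolding W_def over_def .
  ultimately have two: "2 \<le> dim S (U <+>\<^bsub>R\<^esub> V) - dim S W" using dV by linarith
  have fKS: "finite_dimension K S"
    using finite_dimension_subalgebra[OF K fin subfield_imp_subalgebra[OF S KS]] .
  have fSum: "finite_dimension S (U <+>\<^bsub>R\<^esub> V)"
    using sum_space_dim(1)[OF S finite_dimension_subalgebra[OF S fin US]
        finite_dimension_subalgebra[OF S fin VS]] .
  have "dim K (U <+>\<^bsub>R\<^esub> V) = dim K S * dim S (U <+>\<^bsub>R\<^esub> V)"
    using telescopic_base_dim(2)[OF K S fKS fSum] unfolding over_def .
  moreover have "dim K W = dim K S * dim S W"
    using telescopic_base_dim(2)[OF K S fKS finite_dimension_subalgebra[OF S fin WS]]
    unfolding over_def .
  ultimately have "subspace_dist R K U V = dim K S * dim S (U <+>\<^bsub>R\<^esub> V) - dim K S * dim S W"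
    unfolding subspace_dist_def W_def by simp
  also have "\<dots> = dim K S * (dim S (U <+>\<^bsub>R\<^esub> V) - dim S W)"
    by (simp add: diff_mult_distrib2)
  also have "\<dots> \<ge> dim K S * 2" using two by (rule mult_left_mono) simp
  finally show ?thesis unfolding S_def V_def by simp
qed

lemma length_flag_mult [simp]: "length (flag_mult R F a) = length F"
  by (simp add: flag_mult_def)

lemma flag_mult_nth:
  "i < length F \<Longrightarrow> flag_mult R F a ! i = set_rmult R (F ! i) a"
  by (simp add: flag_mult_def set_rmult_def)

lemma (in field) flag_dist_flag_mult_ge:
  assumes K: "subfield K R" and fin: "finite (carrier R)"
    and F: "\<And>i. i < length F \<Longrightarrow> subalgebra K (F ! i) R"
    and g: "g \<in> carrier R" "g \<noteq> \<zero>"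
  shows "(\<Sum>i | i < length F \<and> g \<notin> mult_stabilizer R (F ! i). 2 * dim K (mult_stabilizer R (F ! i)))
           \<le> flag_dist R K F (flag_mult R F g)"
proof -
  let ?I = "{i. i < length F \<and> g \<notin> mult_stabilizer R (F ! i)}"
  have "(\<Sum>i\<in>?I. 2 * dim K (mult_stabilizer R (F ! i))) \<le>
        (\<Sum>i\<in>?I. subspace_dist R K (F ! i) (flag_mult R F g ! i))"
    using subspace_dist_set_rmult_ge[OF K fin F g] by (intro sum_mono) (simp add: flag_mult_nth)
  also have "\<dots> \<le> (\<Sum>i<length F. subspace_dist R K (F ! i) (flag_mult R F g ! i))"
    by (rule sum_mono2) auto
  finally show ?thesis by (simp add: flag_dist_def)
qed

lemma (in field) flag_mult_eq_if_mult_stabilizer: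
  assumes fin: "finite (carrier R)" and F: "\<And>i. i < length F \<Longrightarrow> F ! i \<subseteq> carrier R"
    and g: "g \<in> carrier R" "g \<noteq> \<zero>" and stab: "\<And>i. i < length F \<Longrightarrow> g \<in> mult_stabilizer R (F ! i)"
  shows "flag_mult R F g = F"
  using set_rmult_eq_iff_stabilizer[OF finite_subset[OF F fin] F g] stab
  by (intro nth_equalityI) (simp_all add: flag_mult_nth)

lemma (in ring) flag_mult_flag_mult:
  assumes "\<And>i. i < length F \<Longrightarrow> F ! i \<subseteq> carrier R" "a \<in> carrier R" "b \<in> carrier R"
  shows "flag_mult R (flag_mult R F a) b = flag_mult R F (a \<otimes> b)"
  using assms set_rmult_set_rmult by (intro nth_equalityI) (simp_all add: flag_mult_nth)

lemma double_card_le_weighted_sum: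
  fixes w :: "'i \<Rightarrow> nat"
  assumes "finite I" "J \<subseteq> I" "\<And>i. i \<in> I \<Longrightarrow> m \<le> w i"
  shows "2 * m * card J \<le> (\<Sum>i\<in>I. 2 * w i)"
proof -
  have "2 * m * card J \<le> 2 * m * card I" using card_mono[OF assms(1,2)] by simp
  also have "\<dots> = (\<Sum>i\<in>I. 2 * m)" by simp
  also have "\<dots> \<le> (\<Sum>i\<in>I. 2 * w i)" using assms(3) by (intro sum_mono) simp
  finally show ?thesis .
qed

lemma card_eq_1_if_weighted_sum_minimal:
  fixes w :: "'i \<Rightarrow> nat"
  assumes "finite I" "I \<noteq> {}" "J \<subseteq> I" "\<And>i. i \<in> I \<Longrightarrow> m \<le> w i"
    and "\<And>i. i \<in> I \<Longrightarrow> w i \<le> m \<Longrightarrow> i \<in> J"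
    and "(\<Sum>i\<in>I. 2 * w i) \<le> 2 * m" "0 < m"
  shows "card J = 1"
proof -
  have "2 * m * card I \<le> (\<Sum>i\<in>I. 2 * w i)"
    using double_card_le_weighted_sum[of I I m w] assms(1,4) by blast
  hence "2 * m * card I \<le> 2 * m" using assms(6) by linarith
  moreover have "card I \<noteq> 0" using assms(1,2) by simp
  ultimately have "card I = 1" using assms(7) by simp
  then obtain i where I: "I = {i}" by (rule card_1_singletonE)
  hence "w i \<le> m" using assms(6) by simp
  hence "J = {i}" using assms(3,5) I by auto
  thus ?thesis by simp
qed

lemma (in field) mult_stabilizer_dim_ge:
  assumes K: "subfield K R" and fin: "finite (carrier R)" and U: "subalgebra K U R"
    and L: "subfield L R" "K \<subseteq> L" "L \<subseteq> mult_stabilizer R U"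
  shows "dim K L \<le> dim K (mult_stabilizer R U)"
    and "dim K (mult_stabilizer R U) \<le> dim K L \<Longrightarrow> mult_stabilizer R U = L"
proof -
  have "subalgebra K (mult_stabilizer R U) R"
    using subfield_imp_subalgebra mult_stabilizer_subfield[OF subalgebra.axioms(1)[OF U] fin] L(2,3)
    by blast
  note mono = dim_mono[OF K fin subfield_imp_subalgebra[OF L(1,2)] this L(3)]
  show "dim K L \<le> dim K (mult_stabilizer R U)" by (rule mono(1))
  show "mult_stabilizer R U = L" if "dim K (mult_stabilizer R U) \<le> dim K L"
    using mono that by (simp add: le_antisym)
qed

lemma (in field) flag_dist_flag_mult_self_bounds:
  assumes K: "subfield K R" and fin: "finite (carrier R)"
    and F: "\<And>i. i < length F \<Longrightarrow> subalgebra K (F ! i) R"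
    and L: "subfield L R" "K \<subseteq> L" and LS: "\<And>i. i < length F \<Longrightarrow> L \<subseteq> mult_stabilizer R (F ! i)"
    and g: "g \<in> carrier R" "g \<noteq> \<zero>" and ne: "flag_mult R F g \<noteq> F"
  defines "J \<equiv> {i. i < length F \<and> mult_stabilizer R (F ! i) = L}"
    and "d \<equiv> flag_dist R K F (flag_mult R F g)"
  shows "2 * dim K L * card J \<le> d" and "d = 2 * dim K L \<Longrightarrow> card J = 1"
proof -
  define I where "I = {i. i < length F \<and> g \<notin> mult_stabilizer R (F ! i)}"
  define w where "w i = dim K (mult_stabilizer R (F ! i))" for i
  have "(\<Sum>i\<in>I. 2 * w i) \<le> d"
    using flag_dist_flag_mult_ge[OF K fin F g] unfolding I_def w_def d_def .
  moreover have I_ne: "I \<noteq> {}"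
    using flag_mult_eq_if_mult_stabilizer[OF fin _ g] F subalgebra_in_carrier ne
    unfolding I_def by blast
  moreover have "J \<subseteq> I"
  proof -
    have "g \<notin> L" using I_ne LS unfolding I_def by blast
    thus ?thesis unfolding I_def J_def by auto
  qed
  moreover have "\<And>i. i \<in> I \<Longrightarrow> dim K L \<le> w i"
    and "\<And>i. i \<in> I \<Longrightarrow> w i \<le> dim K L \<Longrightarrow> i \<in> J"
    using mult_stabilizer_dim_ge[OF K fin F L LS] unfolding I_def J_def w_def by auto
  moreover have "finite I" unfolding I_def by simp
  ultimately show "2 * dim K L * card J \<le> d" and "d = 2 * dim K L \<Longrightarrow> card J = 1"
    using double_card_le_weighted_sum[of I J "dim K L" w]
      card_eq_1_if_weighted_sum_minimal[of I J "dim K L" w] dim_subfield_pos[OF K fin L]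
    by (blast intro: order_trans, simp)
qed

lemma (in field) flag_dist_flag_mult_bounds:
  assumes K: "subfield K R" and fin: "finite (carrier R)"
    and F: "\<And>i. i < length F \<Longrightarrow> subalgebra K (F ! i) R"
    and L: "subfield L R" "K \<subseteq> L" and LS: "\<And>i. i < length F \<Longrightarrow> L \<subseteq> mult_stabilizer R (F ! i)"
    and a: "a \<in> carrier R" "a \<noteq> \<zero>" and b: "b \<in> carrier R" "b \<noteq> \<zero>"
    and ne: "flag_mult R F a \<noteq> flag_mult R F b"
  defines "J \<equiv> {i. i < length F \<and> mult_stabilizer R (F ! i) = L}"
    and "d \<equiv> flag_dist R K (flag_mult R F a) (flag_mult R F b)"
  shows "2 * dim K L * card J \<le> d" and "d = 2 * dim K L \<Longrightarrow> card J = 1"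
proof -
  define g where "g = inv a \<otimes> b"
  let ?Fa = "flag_mult R F a"
  have Fc: "\<And>i. i < length F \<Longrightarrow> F ! i \<subseteq> carrier R" using F subalgebra_in_carrier by blast
  have g: "g \<in> carrier R" "g \<noteq> \<zero>" and "a \<otimes> g = b"
    using a b field_Units unfolding g_def by (auto simp: m_assoc[symmetric] Units_closed)
  hence Fb: "flag_mult R ?Fa g = flag_mult R F b" using flag_mult_flag_mult[OF Fc a(1) g(1)] by simp
  have Fa: "\<And>i. i < length ?Fa \<Longrightarrow> subalgebra K (?Fa ! i) R"
    using subalgebra_set_rmult[OF F subfieldE(3)[OF K] a(1)] by (simp add: flag_mult_nth)
  have stab_Fa: "\<And>i. i < length F \<Longrightarrow> mult_stabilizer R (?Fa ! i) = mult_stabilizer R (F ! i)"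
    using mult_stabilizer_set_rmult[OF Fc a] by (simp add: flag_mult_nth)
  have LS_Fa: "\<And>i. i < length ?Fa \<Longrightarrow> L \<subseteq> mult_stabilizer R (?Fa ! i)" using LS stab_Fa by simp
  have ne_Fa: "flag_mult R ?Fa g \<noteq> ?Fa" using ne Fb by simp
  have "J = {i. i < length ?Fa \<and> mult_stabilizer R (?Fa ! i) = L}"
    unfolding J_def using stab_Fa by auto
  thus "2 * dim K L * card J \<le> d" and "d = 2 * dim K L \<Longrightarrow> card J = 1"
    using flag_dist_flag_mult_self_bounds[OF K fin Fa L LS_Fa g ne_Fa] unfolding d_def Fb by simp_all
qed

lemma (in field) flag_orbit_eq_image:
  "flag_orbit R \<beta> F = (\<lambda>j. flag_mult R F (\<beta> [^] j)) ` {..<group.ord (mult_of R) \<beta>}"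
  unfolding flag_orbit_def by auto

lemma (in field) ord_mult_of_gt_1:
  assumes "finite (carrier R)" "\<beta> \<in> carrier R" "\<beta> \<noteq> \<zero>" "\<beta> \<noteq> \<one>"
  shows "1 < group.ord (mult_of R) \<beta>"
proof -
  have mult_of_eq: "mult_of R = Multiplicative_Group.mult_of R"
    by (simp add: Ring_Divisibility.mult_of_def Multiplicative_Group.mult_of_def)
  interpret G: group "mult_of R" unfolding mult_of_eq by (rule field_mult_group)
  show ?thesis
    using G.ord_ge_1[of \<beta>] G.ord_eq_1[of \<beta>] assms by fastforce
qed

lemma (in field) flag_orbit_elem:
  assumes "\<beta> \<in> carrier R" "\<beta> \<noteq> \<zero>" "P \<in> flag_orbit R \<beta> F"
  obtains a where "a \<in> carrier R" "a \<noteq> \<zero>" "P = flag_mult R F a"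
proof -
  obtain j :: nat where "P = flag_mult R F (\<beta> [^] j)" using assms(3) unfolding flag_orbit_def by blast
  moreover have "\<beta> [^] j \<in> carrier R - {\<zero>}"
    using mult_of.nat_pow_closed[of \<beta> j] assms(1,2) by (simp add: Ring_Divisibility.nat_pow_mult_of)
  ultimately show thesis using that by blast
qed

lemma (in field) card_flag_orbit_neq_1:
  assumes fin: "finite (carrier R)" and \<beta>: "\<beta> \<in> carrier R" "\<beta> \<noteq> \<zero>"
    and i: "i < length F" "F ! i \<subseteq> carrier R" "\<beta> \<notin> mult_stabilizer R (F ! i)"
  shows "card (flag_orbit R \<beta> F) \<noteq> 1"
proof
  assume "card (flag_orbit R \<beta> F) = 1"
  then obtain P where P: "flag_orbit R \<beta> F = {P}" by (rule card_1_singletonE)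
  have "\<beta> \<noteq> \<one>" using i(2,3) by (auto simp: mult_stabilizer_def subsetD)
  hence "0 < group.ord (mult_of R) \<beta>" "1 < group.ord (mult_of R) \<beta>"
    using ord_mult_of_gt_1[OF fin \<beta>] by auto
  hence "flag_mult R F (\<beta> [^] (0::nat)) \<in> {P}" "flag_mult R F (\<beta> [^] (1::nat)) \<in> {P}"
    unfolding P[symmetric] flag_orbit_def by blast+
  hence "flag_mult R F \<one> ! i = flag_mult R F \<beta> ! i" using \<beta>(1) by simp
  hence "set_rmult R (F ! i) \<beta> = F ! i" using i(1,2) set_rmult_one by (simp add: flag_mult_nth)
  thus False using set_rmult_eq_iff_stabilizer[OF finite_subset[OF i(2) fin] i(2) \<beta>] i(3) by simp
qed

lemma min_flag_dist_attained:
  assumes "finite C" "C \<noteq> {}" "card C \<noteq> 1"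
  obtains P Q where "P \<in> C" "Q \<in> C" "P \<noteq> Q" "min_flag_dist R K C = flag_dist R K P Q"
proof -
  let ?D = "{flag_dist R K P Q | P Q. P \<in> C \<and> Q \<in> C \<and> P \<noteq> Q}"
  have "finite ?D"
    using finite_subset[of ?D "(\<lambda>(P, Q). flag_dist R K P Q) ` (C \<times> C)"] assms(1) by auto
  moreover have "?D \<noteq> {}"
    using assms card_le_Suc0_iff_eq[OF assms(1)] by (auto simp: card_gt_0_iff le_Suc_eq)
  ultimately have "Min ?D \<in> ?D" by (rule Min_in)
  thus ?thesis using that assms(3) unfolding min_flag_dist_def by auto
qed

theorem mainTheorem1:
  fixes R :: "('a, 'b) ring_scheme" and K L :: "'a set" and F :: "'a set list" and \<beta> :: 'a
    and m :: nat
  assumes "field R" and "finite (carrier R)"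
    and "subfield K R"
    and "is_flag R K F"
    and "flag_best_friend R K L F"
    and "m = ring.dim R K L"
    and "\<beta> \<in> carrier R - L"
  shows "(\<forall>j. j \<ge> 1 \<longrightarrow> card {i. i < length F \<and> best_friend R K L (F ! i)} = j \<longrightarrow>
            min_flag_dist R K (flag_orbit R \<beta> F) \<ge> 2 * m * j)
       \<and> (min_flag_dist R K (flag_orbit R \<beta> F) = 2 * m \<longrightarrow>
            card {i. i < length F \<and> best_friend R K L (F ! i)} = 1)"
proof -
  interpret field R by fact
  note fin = assms(2) and K = assms(3)
  have F: "\<And>i. i < length F \<Longrightarrow> subalgebra K (F ! i) R"
    using assms(4) unfolding is_flag_def by auto
  have L: "subfield L R" "K \<subseteq> L"
    using assms(5) unfolding flag_best_friend_def flag_friend_def by auto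
  have LS: "\<And>i. i < length F \<Longrightarrow> L \<subseteq> mult_stabilizer R (F ! i)"
    using assms(5) subalgebra_imp_subset_mult_stabilizer subfieldE(3)[OF L(1)]
    unfolding flag_best_friend_def flag_friend_def friend_def by blast
  define J where "J = {i. i < length F \<and> mult_stabilizer R (F ! i) = L}"
  have J: "{i. i < length F \<and> best_friend R K L (F ! i)} = J"
    unfolding J_def using best_friend_iff_mult_stabilizer[OF K F fin] by auto
  have \<beta>: "\<beta> \<in> carrier R" "\<beta> \<noteq> \<zero>\<^bsub>R\<^esub>" "\<beta> \<notin> L"
    using assms(7) subringE(2)[OF subfieldE(1)[OF L(1)]] by auto
  let ?C = "flag_orbit R \<beta> F"
  have "\<beta> \<noteq> \<one>\<^bsub>R\<^esub>" using \<beta>(3) subringE(3)[OF subfieldE(1)[OF L(1)]] by auto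
  hence C: "finite ?C" "?C \<noteq> {}"
    using ord_mult_of_gt_1[OF fin \<beta>(1,2)] unfolding flag_orbit_eq_image by auto
  have bounds: "2 * m * card J \<le> flag_dist R K P Q \<and> (flag_dist R K P Q = 2 * m \<longrightarrow> card J = 1)"
    if PQ: "P \<in> ?C" "Q \<in> ?C" "P \<noteq> Q" for P Q
  proof -
    obtain a where a: "a \<in> carrier R" "a \<noteq> \<zero>\<^bsub>R\<^esub>" "P = flag_mult R F a"
      using flag_orbit_elem[OF \<beta>(1,2) PQ(1)] .
    obtain b where b: "b \<in> carrier R" "b \<noteq> \<zero>\<^bsub>R\<^esub>" "Q = flag_mult R F b"
      using flag_orbit_elem[OF \<beta>(1,2) PQ(2)] .
    show ?thesis
      using flag_dist_flag_mult_bounds[OF K fin F L LS a(1,2) b(1,2)] PQ(3) a(3) b(3) assms(6)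
      unfolding J_def by simp
  qed
  have "2 * m * j \<le> min_flag_dist R K ?C" if j: "1 \<le> j" "card J = j" for j
  proof -
    have "J \<noteq> {}" using j by auto
    then obtain i where i: "i < length F" "mult_stabilizer R (F ! i) = L" unfolding J_def by blast
    have "card ?C \<noteq> 1"
      using card_flag_orbit_neq_1[OF fin \<beta>(1,2) i(1) subalgebra_in_carrier[OF F[OF i(1)]]] i(2) \<beta>(3)
      by simp
    then obtain P Q where "P \<in> ?C" "Q \<in> ?C" "P \<noteq> Q" "min_flag_dist R K ?C = flag_dist R K P Q"
      by (rule min_flag_dist_attained[OF C])
    thus ?thesis using bounds j by simp
  qed
  moreover have "card J = 1" if "min_flag_dist R K ?C = 2 * m"
  proof -
    have "card ?C \<noteq> 1"
      using that dim_subfield_pos[OF K fin L] assms(6) by (auto simp: min_flag_dist_def)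
    then obtain P Q where "P \<in> ?C" "Q \<in> ?C" "P \<noteq> Q" "min_flag_dist R K ?C = flag_dist R K P Q"
      by (rule min_flag_dist_attained[OF C])
    thus ?thesis using bounds that by simp
  qed
  ultimately show ?thesis unfolding J by blast
qed

end
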